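(* For any term $t$, any basis term $b$, any type $T$, any unit types $\vec U=U_1,\dots,U_n$ and any context $\Gamma$ of the Scalar type system: (1) if $\Gamma\vdash t:T$ then $\Gamma[\vec U/\vec X]\vdash t:T[\vec U/\vec X]$; (2) if $\Gamma,x:U\vdash t:T$ and $\Gamma\vdash b:U$ then $\Gamma\vdash t[b/x]:T$.
   Context: Fix a commutative ring $(\mathcal{S},+,\times)$. Terms: $t,r ::= b \mid (t)\,r \mid \mathbf{0} \mid \alpha.t \mid t+r$, basis terms $b ::= x \mid \lambda x\,t$, modulo associativity and commutativity of $+$; $t[b/x]$ is capture-avoiding substitution with $(\alpha.t+\beta.u)[b/x]=\alpha.(t[b/x])+\beta.(u[b/x])$. Types: $T ::= U \mid \forall X.T \mid \alpha.T \mid \overline{0}$; unit types: $U ::= X \mid U\to T \mid \forall X.U$. Type variables are only substituted by unit types; $U[\vec V/\vec X]$ means $U[V_1/X_1]\cdots[V_n/X_n]$, $(\alpha.T)[U/X]=\alpha.T[U/X]$, and $\Gamma[\vec U/\vec X]$ applies the substitution to every type of $\Gamma$. Type equivalence $\equiv$ is the least congruence with $\alpha.\overline0\equiv\overline0$, $0.T\equiv\overline0$, $1.T\equiv T$, $\alpha.(\beta.T)\equiv(\alpha\times\beta).T$, $\forall X.\alpha.T\equiv\alpha.\forall X.T$. A context is a set of distinct term variables with unit types. Typing rules: (ax) $\Gamma,x:U\vdash x:U$; ($\equiv$) from $\Gamma\vdash t:T$ and $T\equiv S$ infer $\Gamma\vdash t:S$; ($\to_E$) from $\Gamma\vdash t:\alpha.(U\to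 T)$ and $\Gamma\vdash r:\beta.U$ infer $\Gamma\vdash (t)\,r:(\alpha\times\beta).T$; ($\to_I$) from $\Gamma,x:U\vdash t:T$ infer $\Gamma\vdash\lambda x\,t:U\to T$; ($\forall_E$) from $\Gamma\vdash t:\forall X.T$ infer $\Gamma\vdash t:T[U/X]$, $U$ unit; ($\forall_I$) from $\Gamma\vdash t:T$ with $X$ not free in $\Gamma$ infer $\Gamma\vdash t:\forall X.T$; ($ax_{\overline0}$) $\Gamma\vdash\mathbf 0:\overline0$; ($+_I$) from $\Gamma\vdash t:\alpha.T$ and $\Gamma\vdash r:\beta.T$ infer $\Gamma\vdash t+r:(\alpha+\beta).T$; ($s_I$) from $\Gamma\vdash t:T$ infer $\Gamma\vdash\alpha.t:\alpha.T$. *)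

theory Defs
  imports Main
begin

type_synonym var = nat
type_synonym tvar = nat

text \<open>Terms over a scalar type 'a (a commutative ring):
  t ::= x | lambda x t | (t) r | 0 | alpha.t | t + r.  App t r is the application (t) r.\<close>
datatype 'a trm =
    Var var
  | Lam var "'a trm"
  | App "'a trm" "'a trm"
  | Zero
  | Scal 'a "'a trm"
  | Plus "'a trm" "'a trm"

fun basis :: "'a trm \<Rightarrow> bool" where
  "basis (Var x) = True"
| "basis (Lam x t) = True"
| "basis _ = False"

definition swp :: "nat \<Rightarrow> nat \<Rightarrow> nat \<Rightarrow> nat" where
  "swp a c z = (if z = a then c else if z = c then a else z)"

fun tm_swap :: "var \<Rightarrow> var \<Rightarrow> 'a trm \<Rightarrow> 'a trm" where
  "tm_swap a c (Var z) = Var (swp a c z)"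
| "tm_swap a c (Lam z t) = Lam (swp a c z) (tm_swap a c t)"
| "tm_swap a c (App t r) = App (tm_swap a c t) (tm_swap a c r)"
| "tm_swap a c Zero = Zero"
| "tm_swap a c (Scal \<alpha> t) = Scal \<alpha> (tm_swap a c t)"
| "tm_swap a c (Plus t r) = Plus (tm_swap a c t) (tm_swap a c r)"

lemma size_tm_swap [simp]: "size (tm_swap a c t) = size t"
  by (induction t) auto

fun fv :: "'a trm \<Rightarrow> var set" where
  "fv (Var x) = {x}"
| "fv (Lam x t) = fv t - {x}"
| "fv (App t r) = fv t \<union> fv r"
| "fv Zero = {}"
| "fv (Scal \<alpha> t) = fv t"
| "fv (Plus t r) = fv t \<union> fv r"

text \<open>A name not in a (finite) set of names.\<close>
definition fresh :: "nat set \<Rightarrow> nat" where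
  "fresh S = Suc (Max (insert 0 S))"

function subst :: "'a trm \<Rightarrow> 'a trm \<Rightarrow> var \<Rightarrow> 'a trm" where
  "subst (Var y) b x = (if y = x then b else Var y)"
| "subst (Lam y t) b x =
     (if y = x then Lam y t
      else if y \<in> fv b then
        (let z = fresh (fv b \<union> fv t \<union> {x, y}) in Lam z (subst (tm_swap y z t) b x))
      else Lam y (subst t b x))"
| "subst (App t r) b x = App (subst t b x) (subst r b x)"
| "subst Zero b x = Zero"
| "subst (Scal \<alpha> t) b x = Scal \<alpha> (subst t b x)"
| "subst (Plus t r) b x = Plus (subst t b x) (subst r b x)"
  by pat_completeness auto
termination
  by (relation "measure (\<lambda>(t, b, x). size t)") auto

text \<open>Raw types T ::= X | A -> B | forall X. T | alpha.T | 0bar; well-formedness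
  (unit types vs. general types) is given by the predicates below.\<close>
datatype 'a ty =
    TVar tvar
  | Arr "'a ty" "'a ty"
  | All tvar "'a ty"
  | SMul 'a "'a ty"
  | TZero

fun unit_ty :: "'a ty \<Rightarrow> bool" and is_ty :: "'a ty \<Rightarrow> bool" where
  "unit_ty (TVar X) = True"
| "unit_ty (Arr U T) = (unit_ty U \<and> is_ty T)"
| "unit_ty (All X U) = unit_ty U"
| "unit_ty (SMul \<alpha> T) = False"
| "unit_ty TZero = False"
| "is_ty (TVar X) = True"
| "is_ty (Arr U T) = (unit_ty U \<and> is_ty T)"
| "is_ty (All X T) = is_ty T"
| "is_ty (SMul \<alpha> T) = is_ty T"
| "is_ty TZero = True"

fun ty_swap :: "tvar \<Rightarrow> tvar \<Rightarrow> 'a ty \<Rightarrow> 'a ty" where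
  "ty_swap a c (TVar Z) = TVar (swp a c Z)"
| "ty_swap a c (Arr U T) = Arr (ty_swap a c U) (ty_swap a c T)"
| "ty_swap a c (All Z T) = All (swp a c Z) (ty_swap a c T)"
| "ty_swap a c (SMul \<alpha> T) = SMul \<alpha> (ty_swap a c T)"
| "ty_swap a c TZero = TZero"

lemma size_ty_swap [simp]: "size (ty_swap a c T) = size T"
  by (induction T) auto

fun ftv :: "'a ty \<Rightarrow> tvar set" where
  "ftv (TVar X) = {X}"
| "ftv (Arr U T) = ftv U \<union> ftv T"
| "ftv (All X T) = ftv T - {X}"
| "ftv (SMul \<alpha> T) = ftv T"
| "ftv TZero = {}"

function tsubst :: "'a ty \<Rightarrow> 'a ty \<Rightarrow> tvar \<Rightarrow> 'a ty" where
  "tsubst (TVar Y) U X = (if Y = X then U else TVar Y)"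
| "tsubst (Arr A B) U X = Arr (tsubst A U X) (tsubst B U X)"
| "tsubst (All Y T) U X =
     (if Y = X then All Y T
      else if Y \<in> ftv U then
        (let Z = fresh (ftv U \<union> ftv T \<union> {X, Y}) in All Z (tsubst (ty_swap Y Z T) U X))
      else All Y (tsubst T U X))"
| "tsubst (SMul \<alpha> T) U X = SMul \<alpha> (tsubst T U X)"
| "tsubst TZero U X = TZero"
  by pat_completeness auto
termination
  by (relation "measure (\<lambda>(T, U, X). size T)") auto

definition tsubsts :: "'a ty \<Rightarrow> 'a ty list \<Rightarrow> tvar list \<Rightarrow> 'a ty" where
  "tsubsts T Us Xs = fold (\<lambda>(U, X) S. tsubst S U X) (zip Us Xs) T"

text \<open>Contexts: finite partial maps from term variables to unit types.\<close>
type_synonym 'a ctx = "var \<Rightarrow> 'a ty option"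

definition ctx_ok :: "'a ctx \<Rightarrow> bool" where
  "ctx_ok \<Gamma> \<longleftrightarrow> finite (dom \<Gamma>) \<and> (\<forall>V \<in> ran \<Gamma>. unit_ty V)"

definition ctx_subst :: "'a ctx \<Rightarrow> 'a ty list \<Rightarrow> tvar list \<Rightarrow> 'a ctx" where
  "ctx_subst \<Gamma> Us Xs = (\<lambda>x. map_option (\<lambda>V. tsubsts V Us Xs) (\<Gamma> x))"

definition ftv_ctx :: "'a ctx \<Rightarrow> tvar set" where
  "ftv_ctx \<Gamma> = \<Union> (ftv ` ran \<Gamma>)"

text \<open>Least congruence (on well-formed types, which are taken modulo alpha-conversion of
  bound type variables) containing the five axioms.\<close>
inductive teq :: "('a::comm_ring_1) ty \<Rightarrow> 'a ty \<Rightarrow> bool" where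
  teq_refl: "is_ty T \<Longrightarrow> teq T T"
| teq_sym: "teq T S \<Longrightarrow> teq S T"
| teq_trans: "teq T S \<Longrightarrow> teq S R \<Longrightarrow> teq T R"
| teq_smul_zero: "teq (SMul \<alpha> TZero) TZero"
| teq_zero_smul: "is_ty T \<Longrightarrow> teq (SMul 0 T) TZero"
| teq_one_smul: "is_ty T \<Longrightarrow> teq (SMul 1 T) T"
| teq_smul_smul: "is_ty T \<Longrightarrow> teq (SMul \<alpha> (SMul \<beta> T)) (SMul (\<alpha> * \<beta>) T)"
| teq_all_smul: "is_ty T \<Longrightarrow> teq (All X (SMul \<alpha> T)) (SMul \<alpha> (All X T))"
| teq_alpha: "is_ty T \<Longrightarrow> Y \<notin> ftv (All X T) \<Longrightarrow> teq (All X T) (All Y (tsubst T (TVar Y) X))"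
| teq_arr: "teq U U' \<Longrightarrow> unit_ty U \<Longrightarrow> unit_ty U' \<Longrightarrow> teq T T' \<Longrightarrow> teq (Arr U T) (Arr U' T')"
| teq_all: "teq T T' \<Longrightarrow> teq (All X T) (All X T')"
| teq_smul: "teq T T' \<Longrightarrow> teq (SMul \<alpha> T) (SMul \<alpha> T')"

inductive has_type :: "('a::comm_ring_1) ctx \<Rightarrow> 'a trm \<Rightarrow> 'a ty \<Rightarrow> bool" where
  ax: "\<Gamma> x = Some U \<Longrightarrow> has_type \<Gamma> (Var x) U"
| equiv: "has_type \<Gamma> t T \<Longrightarrow> teq T S \<Longrightarrow> has_type \<Gamma> t S"
| arrE: "has_type \<Gamma> t (SMul \<alpha> (Arr U T)) \<Longrightarrow> has_type \<Gamma> r (SMul \<beta> U) \<Longrightarrow>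
           has_type \<Gamma> (App t r) (SMul (\<alpha> * \<beta>) T)"
| arrI: "unit_ty U \<Longrightarrow> has_type (\<Gamma>(x \<mapsto> U)) t T \<Longrightarrow> has_type \<Gamma> (Lam x t) (Arr U T)"
| allE: "has_type \<Gamma> t (All X T) \<Longrightarrow> unit_ty U \<Longrightarrow> has_type \<Gamma> t (tsubst T U X)"
| allI: "has_type \<Gamma> t T \<Longrightarrow> X \<notin> ftv_ctx \<Gamma> \<Longrightarrow> has_type \<Gamma> t (All X T)"
| axZero: "has_type \<Gamma> Zero TZero"
| plusI: "has_type \<Gamma> t (SMul \<alpha> T) \<Longrightarrow> has_type \<Gamma> r (SMul \<beta> T) \<Longrightarrow>
           has_type \<Gamma> (Plus t r) (SMul (\<alpha> + \<beta>) T)"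
| sI: "has_type \<Gamma> t T \<Longrightarrow> has_type \<Gamma> (Scal \<alpha> t) (SMul \<alpha> T)"

end

theory Submission
  imports Defs
begin

text \<open>Type substitution commutes with every typing rule up to type equivalence. The only
  difficulty is that \<open>tsubst\<close> renames bound type variables, so the substituted types agree
  with the expected ones only up to alpha-conversion; this is settled by comparing types in
  locally nameless form, where alpha-equivalent types coincide, and converting back with
  \<open>teq_alpha\<close>. For term substitution, \<open>subst\<close> may rename a binder before recursing, so the
  induction is on the size of the term, using that typing is invariant under swapping term
  variables and depends on the context only at the free variables of the term. Neither part
  needs \<open>is_ty T\<close>, \<open>basis b\<close> or the length condition.\<close>

section \<open>Locally nameless types\<close>

text \<open>Bound type variables are de Bruijn indices, free ones keep their names.\<close>
datatype 'a lty =
    LFree tvar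
  | LBound nat
  | LArr "'a lty" "'a lty"
  | LAll "'a lty"
  | LSMul 'a "'a lty"
  | LZero

fun lclose :: "nat \<Rightarrow> tvar \<Rightarrow> 'a lty \<Rightarrow> 'a lty" where
  "lclose k X (LFree Y) = (if Y = X then LBound k else LFree Y)"
| "lclose k X (LBound i) = LBound i"
| "lclose k X (LArr A B) = LArr (lclose k X A) (lclose k X B)"
| "lclose k X (LAll A) = LAll (lclose (Suc k) X A)"
| "lclose k X (LSMul \<alpha> A) = LSMul \<alpha> (lclose k X A)"
| "lclose k X LZero = LZero"

fun lsubst :: "'a lty \<Rightarrow> 'a lty \<Rightarrow> tvar \<Rightarrow> 'a lty" where
  "lsubst (LFree Y) U X = (if Y = X then U else LFree Y)"
| "lsubst (LBound i) U X = LBound i"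
| "lsubst (LArr A B) U X = LArr (lsubst A U X) (lsubst B U X)"
| "lsubst (LAll A) U X = LAll (lsubst A U X)"
| "lsubst (LSMul \<alpha> A) U X = LSMul \<alpha> (lsubst A U X)"
| "lsubst LZero U X = LZero"

fun lfv :: "'a lty \<Rightarrow> tvar set" where
  "lfv (LFree Y) = {Y}"
| "lfv (LBound i) = {}"
| "lfv (LArr A B) = lfv A \<union> lfv B"
| "lfv (LAll A) = lfv A"
| "lfv (LSMul \<alpha> A) = lfv A"
| "lfv LZero = {}"

fun lswap :: "tvar \<Rightarrow> tvar \<Rightarrow> 'a lty \<Rightarrow> 'a lty" where
  "lswap a c (LFree Y) = LFree (swp a c Y)"
| "lswap a c (LBound i) = LBound i"
| "lswap a c (LArr A B) = LArr (lswap a c A) (lswap a c B)"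
| "lswap a c (LAll A) = LAll (lswap a c A)"
| "lswap a c (LSMul \<alpha> A) = LSMul \<alpha> (lswap a c A)"
| "lswap a c LZero = LZero"

fun lbounded :: "nat \<Rightarrow> 'a lty \<Rightarrow> bool" where
  "lbounded k (LFree Y) = True"
| "lbounded k (LBound i) = (i < k)"
| "lbounded k (LArr A B) = (lbounded k A \<and> lbounded k B)"
| "lbounded k (LAll A) = lbounded (Suc k) A"
| "lbounded k (LSMul \<alpha> A) = lbounded k A"
| "lbounded k LZero = True"

fun to_lty :: "'a ty \<Rightarrow> 'a lty" where
  "to_lty (TVar X) = LFree X"
| "to_lty (Arr A B) = LArr (to_lty A) (to_lty B)"
| "to_lty (All X T) = LAll (lclose 0 X (to_lty T))"
| "to_lty (SMul \<alpha> T) = LSMul \<alpha> (to_lty T)"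
| "to_lty TZero = LZero"

lemma lfv_lclose [simp]: "lfv (lclose k X A) = lfv A - {X}"
  by (induction A arbitrary: k) auto

lemma lfv_to_lty [simp]: "lfv (to_lty T) = ftv T"
  by (induction T) auto

lemma swp_swp [simp]: "swp a c (swp a c z) = z"
  by (auto simp: swp_def)

lemma swp_eq_iff [simp]: "swp a c y = swp a c z \<longleftrightarrow> y = z"
  by (auto simp: swp_def)

lemma lclose_lswap: "lclose k (swp a c X) (lswap a c A) = lswap a c (lclose k X A)"
  by (induction A arbitrary: k) auto

lemma to_lty_ty_swap: "to_lty (ty_swap a c T) = lswap a c (to_lty T)"
  by (induction T) (auto simp: lclose_lswap)

lemma lclose_lswap_fresh: "Z \<notin> lfv A \<Longrightarrow> lclose k Z (lswap Y Z A) = lclose k Y A"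
  by (induction A arbitrary: k) (auto simp: swp_def)

lemma lclose_fresh: "X \<notin> lfv A \<Longrightarrow> lclose k X A = A"
  by (induction A arbitrary: k) auto

lemma lsubst_self [simp]: "lsubst A (LFree X) X = A"
  by (induction A) auto

lemma lsubst_fresh: "X \<notin> lfv A \<Longrightarrow> lsubst A U X = A"
  by (induction A) auto

lemma lclose_lsubst:
  "Z \<notin> lfv U \<Longrightarrow> Z \<noteq> X \<Longrightarrow> lclose k Z (lsubst A U X) = lsubst (lclose k Z A) U X"
  by (induction A arbitrary: k) (auto simp: lclose_fresh)

lemma lclose_rename: "Z \<notin> lfv A \<Longrightarrow> lclose k Z (lsubst A (LFree Z) Y) = lclose k Y A"
  by (induction A arbitrary: k) auto

lemma lsubst_lsubst:
  "W \<noteq> Y \<Longrightarrow> W \<notin> lfv U \<Longrightarrow> lsubst (lsubst A U Y) (lsubst V U Y) W = lsubst (lsubst A V W) U Y"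
  by (induction A) (auto simp: lsubst_fresh)

lemma lsubst_rename: "W \<notin> lfv A \<Longrightarrow> lsubst (lsubst A (LFree W) X) U W = lsubst A U X"
  by (induction A) auto

lemma lbounded_lclose: "lbounded k A \<Longrightarrow> lbounded (Suc k) (lclose k X A)"
  by (induction A arbitrary: k) auto

lemma lbounded_to_lty: "lbounded 0 (to_lty T)"
  by (induction T) (auto intro: lbounded_lclose)

lemma lclose_inj:
  "lbounded k A \<Longrightarrow> lbounded k B \<Longrightarrow> lclose k X A = lclose k X B \<Longrightarrow> A = B"
  by (induction A arbitrary: k B; case_tac B) (auto split: if_splits)

lemma finite_ftv [simp]: "finite (ftv T)"
  by (induction T) auto

lemma fresh_notin: "finite S \<Longrightarrow> fresh S \<notin> S"
  unfolding fresh_def using Max_ge[of "insert 0 S"] by fastforce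

lemma fresh_exists: "finite (S :: nat set) \<Longrightarrow> \<exists>W. W \<notin> S"
  using fresh_notin by blast

lemma to_lty_tsubst: "to_lty (tsubst T U X) = lsubst (to_lty T) (to_lty U) X"
proof (induction T U X rule: tsubst.induct)
  case (3 Y T U X)
  show ?case
  proof (cases "Y = X \<or> Y \<notin> ftv U")
    case True
    then show ?thesis using 3(2) by (auto simp: lsubst_fresh lclose_lsubst)
  next
    case False
    define Z where "Z = fresh (ftv U \<union> ftv T \<union> {X, Y})"
    have "Z \<notin> ftv U \<union> ftv T \<union> {X, Y}"
      unfolding Z_def by (rule fresh_notin) simp
    moreover have "tsubst (All Y T) U X = All Z (tsubst (ty_swap Y Z T) U X)"
      using False by (simp add: Let_def Z_def)
    ultimately show ?thesis
      using 3(1)[OF _ _ Z_def] False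
      by (simp add: to_lty_ty_swap lclose_lsubst lclose_lswap_fresh)
  qed
qed auto

lemma size_tsubst_TVar: "size (tsubst T (TVar W) X) = size T"
  by (induction T "TVar W :: 'a ty" X rule: tsubst.induct) (auto simp: Let_def)

lemma unit_ty_is_ty: "unit_ty U \<Longrightarrow> is_ty U"
  by (induction U) auto

lemma wf_ty_swap:
  "(unit_ty T \<longrightarrow> unit_ty (ty_swap a c T)) \<and> (is_ty T \<longrightarrow> is_ty (ty_swap a c T))"
  by (induction T) auto

lemma wf_tsubst:
  "unit_ty U \<Longrightarrow> (unit_ty T \<longrightarrow> unit_ty (tsubst T U X)) \<and> (is_ty T \<longrightarrow> is_ty (tsubst T U X))"
  by (induction T U X rule: tsubst.induct) (auto simp: Let_def wf_ty_swap unit_ty_is_ty)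

lemma is_ty_tsubst: "unit_ty U \<Longrightarrow> is_ty T \<Longrightarrow> is_ty (tsubst T U X)"
  using wf_tsubst by blast

lemma unit_ty_tsubst: "unit_ty U \<Longrightarrow> unit_ty T \<Longrightarrow> unit_ty (tsubst T U X)"
  using wf_tsubst by blast

lemma teq_is_ty: "teq A B \<Longrightarrow> is_ty A \<and> is_ty B"
  by (induction rule: teq.induct) (auto simp: is_ty_tsubst unit_ty_is_ty)

text \<open>Well-formed types with the same locally nameless form are equivalent: at each binder,
  rename both sides apart to a common fresh variable with \<open>teq_alpha\<close>.\<close>
lemma teq_if_to_lty_eq: "is_ty A \<Longrightarrow> is_ty B \<Longrightarrow> to_lty A = to_lty B \<Longrightarrow> teq A B"
proof (induction A arbitrary: B rule: measure_induct_rule[of size])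
  case (less A)
  show ?case
  proof (cases A)
    case (Arr A1 A2)
    with less(4) obtain B1 B2 where "B = Arr B1 B2" by (cases B) auto
    with less Arr show ?thesis by (auto intro!: teq_arr simp: unit_ty_is_ty)
  next
    case (All X A1)
    with less(4) obtain Y B1 where B: "B = All Y B1" by (cases B) auto
    define W where "W = fresh (ftv A1 \<union> ftv B1 \<union> {X, Y})"
    have "W \<notin> ftv A1 \<union> ftv B1 \<union> {X, Y}"
      unfolding W_def by (rule fresh_notin) simp
    hence W: "W \<notin> ftv A1" "W \<notin> ftv B1" by auto
    have wf: "is_ty A1" "is_ty B1" using less All B by auto
    have "lclose 0 W (to_lty (tsubst A1 (TVar W) X)) = lclose 0 W (to_lty (tsubst B1 (TVar W) Y))"
      using W less(4) All B by (simp add: to_lty_tsubst lclose_rename)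
    hence "to_lty (tsubst A1 (TVar W) X) = to_lty (tsubst B1 (TVar W) Y)"
      by (rule lclose_inj[OF lbounded_to_lty lbounded_to_lty])
    hence "teq (tsubst A1 (TVar W) X) (tsubst B1 (TVar W) Y)"
      using less(1) All wf by (simp add: size_tsubst_TVar is_ty_tsubst)
    hence "teq (All W (tsubst A1 (TVar W) X)) (All W (tsubst B1 (TVar W) Y))"
      by (rule teq_all)
    moreover have "teq (All X A1) (All W (tsubst A1 (TVar W) X))"
      using W wf by (intro teq_alpha) auto
    moreover have "teq (All Y B1) (All W (tsubst B1 (TVar W) Y))"
      using W wf by (intro teq_alpha) auto
    ultimately show ?thesis
      unfolding All B by (meson teq_sym teq_trans)
  next
    case (SMul \<alpha> A1)
    with less(4) obtain B1 where "B = SMul \<alpha> B1" by (cases B) auto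
    with less SMul show ?thesis by (auto intro!: teq_smul)
  qed (use less(2-4) in \<open>cases B; auto intro: teq_refl\<close>)+
qed

lemma teq_if_teq_to_lty_eq:
  "teq A B \<Longrightarrow> is_ty A' \<Longrightarrow> is_ty B' \<Longrightarrow> to_lty A = to_lty A' \<Longrightarrow> to_lty B = to_lty B' \<Longrightarrow>
   teq A' B'"
  by (meson teq_if_to_lty_eq teq_is_ty teq_sym teq_trans)

section \<open>Sequential type substitution\<close>

fun tsubst_seq :: "'a ty \<Rightarrow> ('a ty \<times> tvar) list \<Rightarrow> 'a ty" where
  "tsubst_seq T [] = T"
| "tsubst_seq T ((U, X) # \<sigma>) = tsubst_seq (tsubst T U X) \<sigma>"

fun lsubst_seq :: "'a lty \<Rightarrow> ('a ty \<times> tvar) list \<Rightarrow> 'a lty" where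
  "lsubst_seq A [] = A"
| "lsubst_seq A ((U, X) # \<sigma>) = lsubst_seq (lsubst A (to_lty U) X) \<sigma>"

fun unit_subst :: "('a ty \<times> tvar) list \<Rightarrow> bool" where
  "unit_subst [] = True"
| "unit_subst ((U, X) # \<sigma>) = (unit_ty U \<and> unit_subst \<sigma>)"

fun subst_tvars :: "('a ty \<times> tvar) list \<Rightarrow> tvar set" where
  "subst_tvars [] = {}"
| "subst_tvars ((U, X) # \<sigma>) = insert X (ftv U \<union> subst_tvars \<sigma>)"

lemma tsubsts_eq_tsubst_seq: "tsubsts T Us Xs = tsubst_seq T (zip Us Xs)"
  unfolding tsubsts_def
  by (induction Us Xs arbitrary: T rule: list_induct2') auto

lemma finite_subst_tvars [simp]: "finite (subst_tvars \<sigma>)"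
  by (induction \<sigma> rule: subst_tvars.induct) auto

lemma tsubst_seq_Arr [simp]: "tsubst_seq (Arr A B) \<sigma> = Arr (tsubst_seq A \<sigma>) (tsubst_seq B \<sigma>)"
  by (induction A \<sigma> arbitrary: B rule: tsubst_seq.induct) auto

lemma tsubst_seq_SMul [simp]: "tsubst_seq (SMul \<alpha> A) \<sigma> = SMul \<alpha> (tsubst_seq A \<sigma>)"
  by (induction A \<sigma> rule: tsubst_seq.induct) auto

lemma tsubst_seq_TZero [simp]: "tsubst_seq TZero \<sigma> = TZero"
  by (induction "TZero :: 'a ty" \<sigma> rule: tsubst_seq.induct) auto

lemma lsubst_seq_LAll [simp]: "lsubst_seq (LAll A) \<sigma> = LAll (lsubst_seq A \<sigma>)"
  by (induction A \<sigma> rule: lsubst_seq.induct) auto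

lemma is_ty_tsubst_seq: "unit_subst \<sigma> \<Longrightarrow> is_ty T \<Longrightarrow> is_ty (tsubst_seq T \<sigma>)"
  by (induction T \<sigma> rule: tsubst_seq.induct) (auto simp: is_ty_tsubst)

lemma unit_ty_tsubst_seq: "unit_subst \<sigma> \<Longrightarrow> unit_ty T \<Longrightarrow> unit_ty (tsubst_seq T \<sigma>)"
  by (induction T \<sigma> rule: tsubst_seq.induct) (auto simp: unit_ty_tsubst)

lemma to_lty_tsubst_seq: "to_lty (tsubst_seq T \<sigma>) = lsubst_seq (to_lty T) \<sigma>"
  by (induction T \<sigma> rule: tsubst_seq.induct) (auto simp: to_lty_tsubst)

lemma lclose_lsubst_seq:
  "W \<notin> subst_tvars \<sigma> \<Longrightarrow> lclose k W (lsubst_seq A \<sigma>) = lsubst_seq (lclose k W A) \<sigma>"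
  by (induction A \<sigma> rule: lsubst_seq.induct) (auto simp: lclose_lsubst)

lemma lsubst_lsubst_seq:
  "W \<notin> subst_tvars \<sigma> \<Longrightarrow>
   lsubst (lsubst_seq A \<sigma>) (lsubst_seq B \<sigma>) W = lsubst_seq (lsubst A B W) \<sigma>"
  by (induction A \<sigma> arbitrary: B rule: lsubst_seq.induct) (auto simp: lsubst_lsubst)

text \<open>Pushing a substitution under a binder \<open>\<forall>X\<close>: up to alpha-equivalence, the bound
  variable is first renamed to a variable \<open>W\<close> the substitution does not touch.\<close>
lemma to_lty_tsubst_seq_All:
  "W \<notin> ftv T \<Longrightarrow> W \<notin> subst_tvars \<sigma> \<Longrightarrow>
   to_lty (tsubst_seq (All X T) \<sigma>) = to_lty (All W (tsubst_seq T ((TVar W, X) # \<sigma>)))"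
  by (simp add: to_lty_tsubst_seq lclose_lsubst_seq lclose_rename to_lty_tsubst)

lemma to_lty_tsubst_tsubst_seq:
  "W \<notin> ftv T \<Longrightarrow> W \<notin> subst_tvars \<sigma> \<Longrightarrow>
   to_lty (tsubst (tsubst_seq T ((TVar W, X) # \<sigma>)) (tsubst_seq U \<sigma>) W)
   = to_lty (tsubst_seq (tsubst T U X) \<sigma>)"
  by (simp add: to_lty_tsubst_seq to_lty_tsubst lsubst_lsubst_seq lsubst_rename)

lemma teq_tsubst_seq: "teq A B \<Longrightarrow> unit_subst \<sigma> \<Longrightarrow> teq (tsubst_seq A \<sigma>) (tsubst_seq B \<sigma>)"
proof (induction arbitrary: \<sigma> rule: teq.induct)
  case (teq_all_smul T X \<alpha>)
  obtain W where W: "W \<notin> ftv T \<union> subst_tvars \<sigma>"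
    using fresh_exists[of "ftv T \<union> subst_tvars \<sigma>"] by auto
  define T' where "T' = tsubst_seq T ((TVar W, X) # \<sigma>)"
  have "is_ty T'"
    unfolding T'_def using teq_all_smul by (simp add: is_ty_tsubst_seq is_ty_tsubst)
  hence "teq (All W (SMul \<alpha> T')) (SMul \<alpha> (All W T'))"
    by (rule teq.teq_all_smul)
  then show ?case
    unfolding T'_def
    by (rule teq_if_teq_to_lty_eq)
       (use W teq_all_smul in \<open>auto simp: is_ty_tsubst_seq to_lty_tsubst_seq_All[of W "SMul \<alpha> T"]
          to_lty_tsubst_seq_All[of W T] simp del: tsubst_seq.simps(2)\<close>)
next
  case (teq_alpha T Y X)
  have "to_lty (All X T) = to_lty (All Y (tsubst T (TVar Y) X))"
    using teq_alpha(2) by (cases "Y = X") (auto simp: to_lty_tsubst lclose_rename)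
  then show ?case
    using teq_alpha
    by (intro teq_if_to_lty_eq) (auto simp: is_ty_tsubst_seq is_ty_tsubst to_lty_tsubst_seq)
next
  case (teq_all T T' X)
  obtain W where W: "W \<notin> ftv T \<union> ftv T' \<union> subst_tvars \<sigma>"
    using fresh_exists[of "ftv T \<union> ftv T' \<union> subst_tvars \<sigma>"] by auto
  have "teq (tsubst_seq T ((TVar W, X) # \<sigma>)) (tsubst_seq T' ((TVar W, X) # \<sigma>))"
    using teq_all(2)[of "(TVar W, X) # \<sigma>"] teq_all(3) by simp
  hence "teq (All W (tsubst_seq T ((TVar W, X) # \<sigma>))) (All W (tsubst_seq T' ((TVar W, X) # \<sigma>)))"
    by (rule teq.teq_all)
  then show ?case
    by (rule teq_if_teq_to_lty_eq)
       (use W teq_is_ty[OF teq_all(1)] teq_all(3) in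
         \<open>auto simp: is_ty_tsubst_seq to_lty_tsubst_seq_All simp del: tsubst_seq.simps(2)\<close>)
qed (auto intro: teq.intros simp: is_ty_tsubst_seq unit_ty_tsubst_seq)

section \<open>Typing under substitution\<close>

fun tvars :: "'a ty \<Rightarrow> tvar set" where
  "tvars (TVar X) = {X}"
| "tvars (Arr U T) = tvars U \<union> tvars T"
| "tvars (All X T) = insert X (tvars T)"
| "tvars (SMul \<alpha> T) = tvars T"
| "tvars TZero = {}"

lemma finite_tvars [simp]: "finite (tvars T)"
  by (induction T) auto

lemma tsubst_TVar_fresh: "W \<notin> tvars A \<Longrightarrow> X \<notin> ftv A \<Longrightarrow> tsubst A (TVar W) X = A"
  by (induction A "TVar W :: 'a ty" X rule: tsubst.induct) auto

definition ctx_subst_seq :: "'a ctx \<Rightarrow> ('a ty \<times> tvar) list \<Rightarrow> 'a ctx" where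
  "ctx_subst_seq \<Gamma> \<sigma> = (\<lambda>v. map_option (\<lambda>V. tsubst_seq V \<sigma>) (\<Gamma> v))"

definition tvars_ctx :: "'a ctx \<Rightarrow> tvar set" where
  "tvars_ctx \<Gamma> = \<Union> (tvars ` ran \<Gamma>)"

lemma ctx_subst_eq_ctx_subst_seq: "ctx_subst \<Gamma> Us Xs = ctx_subst_seq \<Gamma> (zip Us Xs)"
  by (simp add: ctx_subst_def ctx_subst_seq_def tsubsts_eq_tsubst_seq)

lemma unit_subst_zip: "\<forall>V \<in> set Us. unit_ty V \<Longrightarrow> unit_subst (zip Us Xs)"
  by (induction Us Xs rule: list_induct2') auto

lemma ctx_ok_finite_tvars:
  "ctx_ok \<Gamma> \<Longrightarrow> finite (ftv_ctx \<Gamma>) \<and> finite (tvars_ctx \<Gamma>)"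
  unfolding ctx_ok_def ftv_ctx_def tvars_ctx_def by (auto simp: finite_ran)

lemma ctx_ok_upd: "ctx_ok \<Gamma> \<Longrightarrow> unit_ty U \<Longrightarrow> ctx_ok (\<Gamma>(x \<mapsto> U))"
  unfolding ctx_ok_def by (auto simp: ran_def)

lemma ctx_ok_ctx_subst_seq: "ctx_ok \<Gamma> \<Longrightarrow> unit_subst \<sigma> \<Longrightarrow> ctx_ok (ctx_subst_seq \<Gamma> \<sigma>)"
proof -
  assume "ctx_ok \<Gamma>" "unit_subst \<sigma>"
  moreover have "dom (ctx_subst_seq \<Gamma> \<sigma>) = dom \<Gamma>"
    by (auto simp: ctx_subst_seq_def)
  moreover have "ran (ctx_subst_seq \<Gamma> \<sigma>) = (\<lambda>V. tsubst_seq V \<sigma>) ` ran \<Gamma>"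
    by (auto simp: ctx_subst_seq_def ran_def)
  ultimately show ?thesis by (auto simp: ctx_ok_def unit_ty_tsubst_seq)
qed

lemma ctx_subst_seq_upd:
  "ctx_subst_seq (\<Gamma>(x \<mapsto> U)) \<sigma> = (ctx_subst_seq \<Gamma> \<sigma>)(x \<mapsto> tsubst_seq U \<sigma>)"
  by (auto simp: ctx_subst_seq_def)

lemma ctx_subst_seq_rename_fresh:
  assumes "X \<notin> ftv_ctx \<Gamma>" and "W \<notin> tvars_ctx \<Gamma>"
  shows "ctx_subst_seq \<Gamma> ((TVar W, X) # \<sigma>) = ctx_subst_seq \<Gamma> \<sigma>"
proof
  fix v
  show "ctx_subst_seq \<Gamma> ((TVar W, X) # \<sigma>) v = ctx_subst_seq \<Gamma> \<sigma> v"
  proof (cases "\<Gamma> v")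
    case (Some V)
    hence "V \<in> ran \<Gamma>" by (auto simp: ran_def)
    hence "X \<notin> ftv V" "W \<notin> tvars V"
      using assms by (auto simp: ftv_ctx_def tvars_ctx_def)
    thus ?thesis using Some by (simp add: ctx_subst_seq_def tsubst_TVar_fresh)
  qed (simp add: ctx_subst_seq_def)
qed

lemma has_type_is_ty: "has_type \<Gamma> t T \<Longrightarrow> ctx_ok \<Gamma> \<Longrightarrow> is_ty T"
proof (induction rule: has_type.induct)
  case (ax \<Gamma> x U)
  then show ?case by (auto simp: ctx_ok_def ran_def intro: unit_ty_is_ty)
next
  case (arrI U \<Gamma> x t T)
  then show ?case using arrI.IH[OF ctx_ok_upd] by simp
qed (auto dest: teq_is_ty simp: is_ty_tsubst)

text \<open>Generalised to any well-formed context agreeing with the substituted one on the free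
  variables of the term; for the empty substitution this is weakening and strengthening.\<close>
lemma has_type_tsubst_seq_agree:
  "has_type \<Delta> t T \<Longrightarrow> ctx_ok \<Delta> \<Longrightarrow> unit_subst \<sigma> \<Longrightarrow> ctx_ok \<Gamma> \<Longrightarrow>
   \<forall>v \<in> fv t. \<Gamma> v = ctx_subst_seq \<Delta> \<sigma> v \<Longrightarrow> has_type \<Gamma> t (tsubst_seq T \<sigma>)"
proof (induction arbitrary: \<sigma> \<Gamma> rule: has_type.induct)
  case (ax \<Delta> x U)
  then show ?case by (auto simp: ctx_subst_seq_def intro: has_type.ax)
next
  case (equiv \<Delta> t T S)
  then show ?case by (blast intro: has_type.equiv teq_tsubst_seq)
next
  case (arrE \<Delta> t \<alpha> U T r \<beta>)
  then show ?case
    using has_type.arrE[of \<Gamma> t \<alpha> "tsubst_seq U \<sigma>" "tsubst_seq T \<sigma>" r \<beta>] by simp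
next
  case (arrI U \<Delta> x t T)
  have "ctx_ok (\<Delta>(x \<mapsto> U))" "ctx_ok (\<Gamma>(x \<mapsto> tsubst_seq U \<sigma>))"
    using arrI by (simp_all add: ctx_ok_upd unit_ty_tsubst_seq)
  moreover have "\<forall>v \<in> fv t. (\<Gamma>(x \<mapsto> tsubst_seq U \<sigma>)) v = ctx_subst_seq (\<Delta>(x \<mapsto> U)) \<sigma> v"
    using arrI.prems(4) by (simp add: ctx_subst_seq_upd)
  ultimately have "has_type (\<Gamma>(x \<mapsto> tsubst_seq U \<sigma>)) t (tsubst_seq T \<sigma>)"
    using arrI.IH arrI.prems(2) by blast
  then show ?case using arrI by (simp add: has_type.arrI unit_ty_tsubst_seq)
next
  case (allE \<Delta> t X T U)
  obtain W where W: "W \<notin> ftv T \<union> subst_tvars \<sigma>"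
    using fresh_exists[of "ftv T \<union> subst_tvars \<sigma>"] by auto
  have wf: "is_ty (All X T)" using has_type_is_ty[OF allE(1,4)] .
  have "has_type \<Gamma> t (tsubst_seq (All X T) \<sigma>)" using allE by blast
  hence "has_type \<Gamma> t (All W (tsubst_seq T ((TVar W, X) # \<sigma>)))"
    using W wf allE(5)
    by (elim has_type.equiv, intro teq_if_to_lty_eq)
       (auto simp: to_lty_tsubst_seq_All is_ty_tsubst_seq is_ty_tsubst)
  hence "has_type \<Gamma> t (tsubst (tsubst_seq T ((TVar W, X) # \<sigma>)) (tsubst_seq U \<sigma>) W)"
    using allE by (intro has_type.allE) (auto simp: unit_ty_tsubst_seq)
  then show ?case
    using W wf allE
    by (elim has_type.equiv, intro teq_if_to_lty_eq)
       (auto simp: to_lty_tsubst_tsubst_seq is_ty_tsubst_seq is_ty_tsubst unit_ty_tsubst_seq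
          simp del: tsubst_seq.simps(2))
next
  case (allI \<Delta> t T X)
  have "finite (ftv_ctx \<Gamma>)" "finite (tvars_ctx \<Delta>)"
    using ctx_ok_finite_tvars allI.prems(1,3) by auto
  then obtain W where W: "W \<notin> ftv T \<union> subst_tvars \<sigma> \<union> ftv_ctx \<Gamma> \<union> tvars_ctx \<Delta> \<union> {X}"
    using fresh_exists[of "ftv T \<union> subst_tvars \<sigma> \<union> ftv_ctx \<Gamma> \<union> tvars_ctx \<Delta> \<union> {X}"] by auto
  have "ctx_subst_seq \<Delta> ((TVar W, X) # \<sigma>) = ctx_subst_seq \<Delta> \<sigma>"
    using W allI(2) by (intro ctx_subst_seq_rename_fresh) auto
  hence "has_type \<Gamma> t (tsubst_seq T ((TVar W, X) # \<sigma>))"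
    using allI.prems by (intro allI.IH) simp_all
  hence "has_type \<Gamma> t (All W (tsubst_seq T ((TVar W, X) # \<sigma>)))"
    using W by (intro has_type.allI) auto
  then show ?case
    using W has_type_is_ty[OF allI(1,4)] allI.prems(2)
    by (elim has_type.equiv, intro teq_if_to_lty_eq)
       (auto simp: to_lty_tsubst_seq_All is_ty_tsubst_seq is_ty_tsubst simp del: tsubst_seq.simps(2))
next
  case (plusI \<Delta> t \<alpha> T r \<beta>)
  then show ?case
    using has_type.plusI[of \<Gamma> t \<alpha> "tsubst_seq T \<sigma>" r \<beta>] by simp
qed (auto intro: has_type.intros)

lemma has_type_ctx_subst_seq:
  "has_type \<Gamma> t T \<Longrightarrow> ctx_ok \<Gamma> \<Longrightarrow> unit_subst \<sigma> \<Longrightarrow>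
   has_type (ctx_subst_seq \<Gamma> \<sigma>) t (tsubst_seq T \<sigma>)"
  by (simp add: has_type_tsubst_seq_agree ctx_ok_ctx_subst_seq)

lemma has_type_ctx_cong:
  "has_type \<Gamma> t T \<Longrightarrow> ctx_ok \<Gamma> \<Longrightarrow> ctx_ok \<Gamma>' \<Longrightarrow> \<forall>v \<in> fv t. \<Gamma>' v = \<Gamma> v \<Longrightarrow>
   has_type \<Gamma>' t T"
  using has_type_tsubst_seq_agree[of \<Gamma> t T "[]" \<Gamma>']
  by (simp add: ctx_subst_seq_def option.map_ident)

lemma finite_fv [simp]: "finite (fv t)"
  by (induction t) auto

lemma fv_tm_swap: "fv (tm_swap y z t) = swp y z ` fv t"
  by (induction t) (auto simp: image_def swp_def)

lemma ran_comp_swp [simp]: "ran (\<Gamma> \<circ> swp y z) = ran \<Gamma>"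
  unfolding ran_def by (metis comp_apply swp_swp)

lemma ctx_ok_comp_swp: "ctx_ok \<Gamma> \<Longrightarrow> ctx_ok (\<Gamma> \<circ> swp y z)"
proof -
  assume "ctx_ok \<Gamma>"
  moreover have "dom (\<Gamma> \<circ> swp y z) = swp y z -` dom \<Gamma>"
    by (auto simp: dom_def)
  moreover have "inj (swp y z)"
    by (rule injI) simp
  ultimately show ?thesis
    unfolding ctx_ok_def by (simp add: finite_vimageI)
qed

lemma comp_swp_upd: "(\<Gamma> \<circ> swp y z)(swp y z x \<mapsto> U) = \<Gamma>(x \<mapsto> U) \<circ> swp y z"
  by (rule ext) (auto simp: swp_def)

lemma has_type_tm_swap: "has_type \<Gamma> t T \<Longrightarrow> has_type (\<Gamma> \<circ> swp y z) (tm_swap y z t) T"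
proof (induction rule: has_type.induct)
  case (ax \<Gamma> x U)
  then show ?case by (simp add: has_type.ax)
next
  case (arrI U \<Gamma> x t T)
  have "has_type ((\<Gamma> \<circ> swp y z)(swp y z x \<mapsto> U)) (tm_swap y z t) T"
    unfolding comp_swp_upd by (rule arrI.IH)
  then show ?case
    unfolding tm_swap.simps by (rule has_type.arrI[OF arrI(1)])
next
  case (allI \<Gamma> t T X)
  have "X \<notin> ftv_ctx (\<Gamma> \<circ> swp y z)"
    using allI(2) by (simp add: ftv_ctx_def)
  then show ?case by (rule has_type.allI[OF allI.IH])
qed (auto intro: has_type.intros)

text \<open>When \<open>y\<close> would capture a free variable of \<open>b\<close>, the renamed body is typed by
  equivariance and a change of context; hence \<open>IH\<close> is needed for all terms of the size of
  the body, not only for the body itself.\<close>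
lemma has_type_subst_Lam:
  assumes IH: "\<And>s \<Gamma>'. size s = size t \<Longrightarrow> has_type (\<Gamma>'(x \<mapsto> U)) s T \<Longrightarrow> x \<notin> dom \<Gamma>' \<Longrightarrow>
                 ctx_ok \<Gamma>' \<Longrightarrow> has_type \<Gamma>' b U \<Longrightarrow> has_type \<Gamma>' (subst s b x) T"
    and V: "unit_ty V" and t: "has_type (\<Gamma>(x \<mapsto> U, y \<mapsto> V)) t T"
    and x: "x \<notin> dom \<Gamma>" and ok: "ctx_ok \<Gamma>" and U: "unit_ty U" and b: "has_type \<Gamma> b U"
  shows "has_type \<Gamma> (subst (Lam y t) b x) (Arr V T)"
proof -
  have ok_upd: "ctx_ok (\<Gamma>(v \<mapsto> V))" for v
    using ok V by (rule ctx_ok_upd)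
  have b_upd: "has_type (\<Gamma>(v \<mapsto> V)) b U" if "v \<notin> fv b" for v
    using has_type_ctx_cong[OF b ok ok_upd] that by auto
  consider "y = x" | "y \<noteq> x" "y \<notin> fv b" | "y \<noteq> x" "y \<in> fv b" by blast
  then show ?thesis
  proof cases
    case 1
    then show ?thesis using t V by (simp add: has_type.arrI)
  next
    case 2
    have "has_type (\<Gamma>(y \<mapsto> V, x \<mapsto> U)) t T"
      using t 2 by (simp add: fun_upd_twist)
    hence "has_type (\<Gamma>(y \<mapsto> V)) (subst t b x) T"
      using IH x 2 ok_upd b_upd by auto
    then show ?thesis using 2 V by (simp add: has_type.arrI)
  next
    case 3
    define z where "z = fresh (fv b \<union> fv t \<union> {x, y})"
    have "z \<notin> fv b \<union> fv t \<union> {x, y}"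
      unfolding z_def by (rule fresh_notin) simp
    hence z: "z \<notin> fv b" "z \<notin> fv t" "z \<noteq> x" "z \<noteq> y" by auto
    have "has_type (\<Gamma>(x \<mapsto> U, y \<mapsto> V) \<circ> swp y z) (tm_swap y z t) T"
      using t by (rule has_type_tm_swap)
    moreover have "ctx_ok (\<Gamma>(x \<mapsto> U, y \<mapsto> V) \<circ> swp y z)" "ctx_ok (\<Gamma>(z \<mapsto> V, x \<mapsto> U))"
      using ok U V by (simp_all add: ctx_ok_comp_swp ctx_ok_upd)
    moreover have "\<forall>v \<in> fv (tm_swap y z t). (\<Gamma>(z \<mapsto> V, x \<mapsto> U)) v = (\<Gamma>(x \<mapsto> U, y \<mapsto> V) \<circ> swp y z) v"
      using z 3 by (auto simp: fv_tm_swap swp_def)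
    ultimately have "has_type (\<Gamma>(z \<mapsto> V, x \<mapsto> U)) (tm_swap y z t) T"
      by (rule has_type_ctx_cong)
    hence "has_type (\<Gamma>(z \<mapsto> V)) (subst (tm_swap y z t) b x) T"
      using IH x z ok_upd b_upd by auto
    moreover have "subst (Lam y t) b x = Lam z (subst (tm_swap y z t) b x)"
      using 3 by (simp add: Let_def z_def)
    ultimately show ?thesis using V by (simp add: has_type.arrI)
  qed
qed

text \<open>Induction on the size of the term, and inside it on the typing derivation: the
  structural rules keep the term, the syntax-directed ones shrink it.\<close>
lemma has_type_subst:
  assumes "has_type (\<Gamma>(x \<mapsto> U)) t T" and "x \<notin> dom \<Gamma>" and "ctx_ok \<Gamma>"
    and U: "unit_ty U" and "has_type \<Gamma> b U"
  shows "has_type \<Gamma> (subst t b x) T"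
  using assms(1-3,5)
proof (induction t arbitrary: \<Gamma> T rule: measure_induct_rule[of size])
  case (less t)
  have "has_type \<Gamma> (subst s b x) T"
    if "has_type \<Delta> s T" "size s \<le> size t" "\<Delta> = \<Gamma>(x \<mapsto> U)" "x \<notin> dom \<Gamma>" "ctx_ok \<Gamma>"
       "has_type \<Gamma> b U" for \<Delta> s T \<Gamma>
    using that
  proof (induction arbitrary: \<Gamma> rule: has_type.induct)
    case (ax \<Delta> y T)
    then show ?case by (cases "y = x") (auto intro: has_type.ax)
  next
    case (equiv \<Delta> s T S)
    then show ?case by (blast intro: has_type.equiv)
  next
    case (arrE \<Delta> s \<alpha> V T r \<beta>)
    have "has_type \<Gamma> (subst s b x) (SMul \<alpha> (Arr V T))" "has_type \<Gamma> (subst r b x) (SMul \<beta> V)"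
      using arrE by (auto intro: less.IH)
    then show ?case by (simp add: has_type.arrE)
  next
    case (arrI V \<Delta> y s T)
    have IH: "has_type \<Gamma>' (subst s' b x) T"
      if "size s' = size s" "has_type (\<Gamma>'(x \<mapsto> U)) s' T" "x \<notin> dom \<Gamma>'" "ctx_ok \<Gamma>'"
         "has_type \<Gamma>' b U" for s' \<Gamma>'
      using less.IH[OF _ that(2-5)] that(1) arrI.prems(1) by simp
    have body: "has_type (\<Gamma>(x \<mapsto> U, y \<mapsto> V)) s T"
      using arrI.hyps(2) unfolding arrI.prems(2) .
    show ?case
      by (rule has_type_subst_Lam[OF IH arrI.hyps(1) body arrI.prems(3,4) U arrI.prems(5)])
  next
    case (allE \<Delta> s X T V)
    then show ?case by (blast intro: has_type.allE)
  next
    case (allI \<Delta> s T X)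
    have "ran \<Gamma> \<subseteq> ran \<Delta>" using allI.prems(2,3) by (auto simp: ran_def)
    hence "X \<notin> ftv_ctx \<Gamma>" using allI.hyps(2) by (auto simp: ftv_ctx_def)
    moreover have "has_type \<Gamma> (subst s b x) T" using allI.IH allI.prems by blast
    ultimately show ?case by (blast intro: has_type.allI)
  next
    case (axZero \<Delta>)
    then show ?case by (simp add: has_type.axZero)
  next
    case (plusI \<Delta> s \<alpha> T r \<beta>)
    have "has_type \<Gamma> (subst s b x) (SMul \<alpha> T)" "has_type \<Gamma> (subst r b x) (SMul \<beta> T)"
      using plusI by (auto intro: less.IH)
    then show ?case by (simp add: has_type.plusI)
  next
    case (sI \<Delta> s T \<alpha>)
    have "has_type \<Gamma> (subst s b x) T"
      using sI by (auto intro: less.IH)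
    then show ?case by (simp add: has_type.sI)
  qed
  then show ?case using less.prems by blast
qed

theorem mainTheorem7:
  fixes \<Gamma> :: "('a::comm_ring_1) ctx" and t b :: "'a trm" and T U :: "'a ty"
    and Us :: "'a ty list" and Xs :: "tvar list" and x :: var
  assumes "ctx_ok \<Gamma>" and "is_ty T"
  shows "(length Us = length Xs \<and> (\<forall>V \<in> set Us. unit_ty V) \<and> has_type \<Gamma> t T
           \<longrightarrow> has_type (ctx_subst \<Gamma> Us Xs) t (tsubsts T Us Xs))
       \<and> (unit_ty U \<and> x \<notin> dom \<Gamma> \<and> basis b \<and> has_type (\<Gamma>(x \<mapsto> U)) t T \<and> has_type \<Gamma> b U
           \<longrightarrow> has_type \<Gamma> (subst t b x) T)"
proof (intro conjI impI)
  assume "length Us = length Xs \<and> (\<forall>V \<in> set Us. unit_ty V) \<and> has_type \<Gamma> t T"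
  then show "has_type (ctx_subst \<Gamma> Us Xs) t (tsubsts T Us Xs)"
    unfolding ctx_subst_eq_ctx_subst_seq tsubsts_eq_tsubst_seq
    using assms(1) by (simp add: has_type_ctx_subst_seq unit_subst_zip)
next
  assume "unit_ty U \<and> x \<notin> dom \<Gamma> \<and> basis b \<and> has_type (\<Gamma>(x \<mapsto> U)) t T \<and> has_type \<Gamma> b U"
  then show "has_type \<Gamma> (subst t b x) T"
    using assms(1) has_type_subst by blast
qed

end
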